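(* Let $d\ge2$ and let $P$ be a $d$-dimensional exceptional simplex. Then $\mu^F(P)=d-\tfrac12$.
   Context: For a $d$-dimensional rational polytope $P\subseteq\mathbb{R}^d$ and $a\in(\mathbb{Z}^d)^*$ let $h_P(a)=\min_{x\in P}\langle a,x\rangle$. For $s>0$ the Fine adjoint polytope is $P^{F(s)}=\{x\in\mathbb{R}^d : \langle a,x\rangle\ge h_P(a)+s \text{ for all } a\in(\mathbb{Z}^d)^*\setminus\{0\}\}$. The Fine $\mathbb{Q}$-codegree is $\mu^F(P)=(\sup\{s>0 : P^{F(s)}\neq\emptyset\})^{-1}$. A $d$-dimensional lattice polytope $P$ is a lattice pyramid over a lattice polytope $P'\subseteq\mathbb{R}^{d-1}$ if $P$ is unimodularly equivalent to $\operatorname{conv}(P'\times\{1\},\{0\})\subseteq\mathbb{R}^{d-1}\times\mathbb{R}$. For $d\ge2$, a $d$-dimensional lattice polytope is an exceptional simplex if it is (up to unimodular equivalence) a $(d-2)$-fold iterated lattice pyramid over $2\Delta_2=\operatorname{conv}\{(0,0),(2,0),(0,2)\}$. *)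

theory Defs
  imports "HOL-Analysis.Analysis"
begin

text \<open>Points of R^d are represented as functions nat => real vanishing outside {0..<d};
  integer (dual) vectors of Z^d as functions nat => int vanishing outside {0..<d}.\<close>

definition inRd :: "nat \<Rightarrow> (nat \<Rightarrow> real) \<Rightarrow> bool" where
  "inRd d x \<longleftrightarrow> (\<forall>i\<ge>d. x i = 0)"

definition inZd :: "nat \<Rightarrow> (nat \<Rightarrow> int) \<Rightarrow> bool" where
  "inZd d a \<longleftrightarrow> (\<forall>i\<ge>d. a i = 0)"

definition pair :: "nat \<Rightarrow> (nat \<Rightarrow> int) \<Rightarrow> (nat \<Rightarrow> real) \<Rightarrow> real" where
  "pair d a x = (\<Sum>i<d. real_of_int (a i) * x i)"

definition fconv :: "(nat \<Rightarrow> real) set \<Rightarrow> (nat \<Rightarrow> real) set" where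
  "fconv S = {x. \<exists>F u. finite F \<and> F \<noteq> {} \<and> F \<subseteq> S \<and> (\<forall>y\<in>F. 0 \<le> u y) \<and>
      sum u F = 1 \<and> x = (\<lambda>i. \<Sum>y\<in>F. u y * y i)}"

definition hP :: "nat \<Rightarrow> (nat \<Rightarrow> real) set \<Rightarrow> (nat \<Rightarrow> int) \<Rightarrow> real" where
  "hP d P a = Inf ((\<lambda>x. pair d a x) ` P)"

definition fine_adjoint :: "nat \<Rightarrow> (nat \<Rightarrow> real) set \<Rightarrow> real \<Rightarrow> (nat \<Rightarrow> real) set" where
  "fine_adjoint d P s = {x. inRd d x \<and>
      (\<forall>a. inZd d a \<and> (\<exists>i<d. a i \<noteq> 0) \<longrightarrow> pair d a x \<ge> hP d P a + s)}"

definition fine_codegree :: "nat \<Rightarrow> (nat \<Rightarrow> real) set \<Rightarrow> real" where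
  "fine_codegree d P = inverse (Sup {s. s > 0 \<and> fine_adjoint d P s \<noteq> {}})"

text \<open>Unimodular (affine) equivalence: x |-> U x + t with U in GL_d(Z), t in Z^d.\<close>
definition unimod_map :: "nat \<Rightarrow> (nat \<Rightarrow> nat \<Rightarrow> int) \<Rightarrow> (nat \<Rightarrow> int) \<Rightarrow>
    (nat \<Rightarrow> real) \<Rightarrow> (nat \<Rightarrow> real)" where
  "unimod_map d U t x = (\<lambda>i. if i < d then (\<Sum>j<d. real_of_int (U i j) * x j) + real_of_int (t i) else 0)"

definition unimod_equiv :: "nat \<Rightarrow> (nat \<Rightarrow> real) set \<Rightarrow> (nat \<Rightarrow> real) set \<Rightarrow> bool" where
  "unimod_equiv d P Q \<longleftrightarrow> P \<subseteq> Collect (inRd d) \<and> Q \<subseteq> Collect (inRd d) \<and>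
     (\<exists>U V t. (\<forall>i<d. \<forall>k<d. (\<Sum>j<d. U i j * V j k) = (if i = k then 1 else 0)) \<and>
              Q = unimod_map d U t ` P)"

text \<open>Lattice pyramid over P' (in R^(d-1)): conv(P' x {1}, 0) in R^d, the new coordinate
  being coordinate d-1.\<close>
definition lattice_pyramid :: "nat \<Rightarrow> (nat \<Rightarrow> real) set \<Rightarrow> (nat \<Rightarrow> real) set" where
  "lattice_pyramid d P' = fconv ((\<lambda>x. x(d - 1 := 1)) ` P' \<union> {\<lambda>_. 0})"

definition two_Delta2 :: "(nat \<Rightarrow> real) set" where
  "two_Delta2 = fconv {\<lambda>_. 0, (\<lambda>i. if i = 0 then 2 else 0), (\<lambda>i. if i = 1 then 2 else 0)}"

text \<open>k-fold iterated lattice pyramid over 2 Delta_2 (a subset of R^(k+2)).\<close>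
fun iter_pyramid :: "nat \<Rightarrow> (nat \<Rightarrow> real) set" where
  "iter_pyramid 0 = two_Delta2"
| "iter_pyramid (Suc k) = lattice_pyramid (k + 3) (iter_pyramid k)"

definition exceptional_simplex :: "nat \<Rightarrow> (nat \<Rightarrow> real) set \<Rightarrow> bool" where
  "exceptional_simplex d P \<longleftrightarrow> 2 \<le> d \<and> unimod_equiv d P (iter_pyramid (d - 2))"

end

theory Submission
  imports Defs "Jordan_Normal_Form.Determinant"
begin

(*
  The Fine codegree is invariant under unimodular equivalence: an affine unimodular map
  x \<mapsto> U x + t transforms integer functionals by b \<mapsto> U\<^sup>T b, a bijection of the
  nonzero ones, and shifts every h_P by the same constant. So it suffices to treat
  Q = iter_pyramid k in dimension d = k + 2. With f the indicator vector of {2..d-1},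
  Q is the hull of 2e_0 + f, 2e_1 + f and the indicator vectors of the tails {j..d-1},
  2 \<le> j \<le> d (the apex 0 being the tail j = d).

  Upper bound: the functionals e_0, e_1, 2e_2 - e_0 - e_1, e_(j+1) - e_j (2 \<le> j \<le> d-2) and
  -e_(d-1) have minima 0, ..., 0, -1 on Q (for d = 2 take e_0, e_1, -e_0 - e_1 with minima
  0, 0, -2), and with weights 1, 1, 1, 2, ..., 2 they add up to zero; hence every point of
  Q^F(s) satisfies (2d - 1) s \<le> 2.

  Lower bound: let y be the average of the vertices with the same weights 1, 1, 1, 2, ..., 2.
  For a nonzero integer b, (2d - 1) (<b,y> - h_Q(b)) is a nonnegative integer, and a parity
  argument shows it cannot be 0 or 1. Hence y \<in> Q^F(2/(2d-1)) and \<mu>^F(Q) = d - 1/2.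
*)

lemma pair_add_right: "pair d b (\<lambda>i. x i + y i) = pair d b x + pair d b y"
  unfolding pair_def by (simp add: sum.distrib distrib_left)

lemma pair_scale_right: "pair d b (\<lambda>i. c * x i) = c * pair d b x"
  unfolding pair_def by (simp add: sum_distrib_left mult_ac)

lemma pair_sum_right: "pair d b (\<lambda>i. \<Sum>j\<in>J. x j i) = (\<Sum>j\<in>J. pair d b (x j))"
  unfolding pair_def by (simp add: sum_distrib_left sum.swap[of _ J])

lemma pair_zero_left [simp]: "pair d (\<lambda>_. 0) x = 0"
  unfolding pair_def by simp

lemma pair_fun_upd_left:
  assumes "m < d"
  shows "pair d (b(m := c)) x = pair d b x + of_int (c - b m) * x m"
proof -
  have "pair d (b(m := c)) x - pair d b x = (\<Sum>i<d. if i = m then of_int (c - b m) * x m else 0)"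
    unfolding pair_def sum_subtractf[symmetric] by (rule sum.cong) (auto simp: algebra_simps)
  then show ?thesis using assms by simp
qed

lemma pair_fun_upd:
  assumes "m < d"
  shows "pair d b (x(m := c)) = pair d b x + of_int (b m) * (c - x m)"
proof -
  have "pair d b (x(m := c)) - pair d b x = (\<Sum>i<d. if i = m then of_int (b m) * (c - x m) else 0)"
    unfolding pair_def sum_subtractf[symmetric] by (rule sum.cong) (auto simp: algebra_simps)
  then show ?thesis using assms by simp
qed

lemma pair_fun_upd_ge: "d \<le> m \<Longrightarrow> pair d b (x(m := c)) = pair d b x"
  unfolding pair_def by simp

lemma pair_lessThan_Suc: "pair (Suc n) b x = pair n b x + of_int (b n) * x n"
  unfolding pair_def by simp

lemma pair_fconv_lower_bound:
  assumes "\<And>v. v \<in> S \<Longrightarrow> \<beta> \<le> pair d b v" and "y \<in> fconv S"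
  shows "\<beta> \<le> pair d b y"
proof -
  obtain F u where F: "finite F" "F \<subseteq> S" "\<forall>v\<in>F. 0 \<le> u v" "sum u F = 1"
    and y: "y = (\<lambda>i. \<Sum>v\<in>F. u v * v i)"
    using assms(2) unfolding fconv_def by blast
  have "(\<Sum>v\<in>F. u v * \<beta>) \<le> (\<Sum>v\<in>F. u v * pair d b v)"
    using F assms(1) by (intro sum_mono mult_left_mono) auto
  also have "\<dots> = pair d b y"
    unfolding y by (simp add: pair_sum_right pair_scale_right)
  finally show ?thesis using F by (simp add: sum_distrib_right[symmetric])
qed

lemma mem_fconv: "v \<in> S \<Longrightarrow> v \<in> fconv S"
  unfolding fconv_def by (rule CollectI, rule exI[of _ "{v}"], rule exI[of _ "\<lambda>_. 1"]) auto

section \<open>Unimodular invariance of the Fine codegree\<close>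

definition int_mat_inverse ::
    "nat \<Rightarrow> (nat \<Rightarrow> nat \<Rightarrow> int) \<Rightarrow> (nat \<Rightarrow> nat \<Rightarrow> int) \<Rightarrow> bool" where
  "int_mat_inverse d U V \<longleftrightarrow>
     (\<forall>i<d. \<forall>k<d. (\<Sum>j<d. U i j * V j k) = (if i = k then 1 else 0))"

lemma unimod_equiv_iff:
  "unimod_equiv d P Q \<longleftrightarrow> P \<subseteq> Collect (inRd d) \<and> Q \<subseteq> Collect (inRd d) \<and>
     (\<exists>U V t. int_mat_inverse d U V \<and> Q = unimod_map d U t ` P)"
  unfolding unimod_equiv_def int_mat_inverse_def ..

lemma int_mat_inverse_commute:
  assumes "int_mat_inverse d U V"
  shows "int_mat_inverse d V U"
proof -
  define A :: "real mat" where "A = mat d d (\<lambda>(i, j). of_int (U i j))"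
  define B :: "real mat" where "B = mat d d (\<lambda>(i, j). of_int (V i j))"
  have A: "A \<in> carrier_mat d d" and B: "B \<in> carrier_mat d d" by (auto simp: A_def B_def)
  have entry: "(M * N) $$ (i, k) = of_int (\<Sum>j<d. X i j * Y j k)"
    if "M = mat d d (\<lambda>(i, j). of_int (X i j))" "N = mat d d (\<lambda>(i, j). of_int (Y i j))"
       "i < d" "k < d" for M N :: "real mat" and X Y i k
    using that by (simp add: scalar_prod_def atLeast0LessThan)
  have "A * B = 1\<^sub>m d"
  proof (rule eq_matI)
    fix i k assume "i < dim_row (1\<^sub>m d)" "k < dim_col (1\<^sub>m d)"
    then show "(A * B) $$ (i, k) = 1\<^sub>m d $$ (i, k)"
      using assms entry[OF A_def B_def] by (simp add: int_mat_inverse_def)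
  qed (use A B in auto)
  then have "B * A = 1\<^sub>m d" by (rule mat_mult_left_right_inverse[OF A B])
  then have "of_int (\<Sum>j<d. V i j * U j k) = (if i = k then 1 else (0::real))" if "i < d" "k < d" for i k
    using that entry[OF B_def A_def that] by (metis index_one_mat(1))
  then show ?thesis
    unfolding int_mat_inverse_def by (metis of_int_0_eq_iff of_int_eq_1_iff)
qed

lemma unimod_map_inverse:
  assumes "int_mat_inverse d V U" and "inRd d x"
  shows "unimod_map d V (\<lambda>i. - (\<Sum>j<d. V i j * t j)) (unimod_map d U t x) = x"
proof
  fix i
  show "unimod_map d V (\<lambda>i. - (\<Sum>j<d. V i j * t j)) (unimod_map d U t x) i = x i"
  proof (cases "i < d")
    case True
    have "(\<Sum>j<d. of_int (V i j) * ((\<Sum>l<d. of_int (U j l) * x l) + of_int (t j)))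
        = (\<Sum>l<d. of_int (\<Sum>j<d. V i j * U j l) * x l) + of_int (\<Sum>j<d. V i j * t j)"
      by (simp add: distrib_left sum.distrib sum_distrib_left sum_distrib_right mult.assoc)
        (rule sum.swap)
    also have "(\<Sum>l<d. of_int (\<Sum>j<d. V i j * U j l) * x l) = (\<Sum>l<d. if l = i then x l else 0)"
      using assms(1) True by (intro sum.cong) (auto simp: int_mat_inverse_def)
    also have "\<dots> = x i"
      using True by simp
    finally show ?thesis
      using True by (simp add: unimod_map_def)
  next
    case False
    then show ?thesis using assms(2) by (simp add: unimod_map_def inRd_def)
  qed
qed

lemma unimod_equiv_sym:
  assumes "unimod_equiv d P Q"
  shows "unimod_equiv d Q P"
proof -
  obtain U V t where UV: "int_mat_inverse d U V" and Q: "Q = unimod_map d U t ` P"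
    and P: "P \<subseteq> Collect (inRd d)" and "Q \<subseteq> Collect (inRd d)"
    using assms unfolding unimod_equiv_iff by blast
  have "P = unimod_map d V (\<lambda>i. - (\<Sum>j<d. V i j * t j)) ` Q"
    using unimod_map_inverse[OF int_mat_inverse_commute[OF UV]] P unfolding Q image_image
    by (simp add: subset_eq)
  with UV P \<open>Q \<subseteq> _\<close> show ?thesis
    unfolding unimod_equiv_iff by (blast intro: int_mat_inverse_commute)
qed

definition transpose_mult ::
    "nat \<Rightarrow> (nat \<Rightarrow> nat \<Rightarrow> int) \<Rightarrow> (nat \<Rightarrow> int) \<Rightarrow> nat \<Rightarrow> int" where
  "transpose_mult d U b = (\<lambda>j. if j < d then \<Sum>i<d. b i * U i j else 0)"

lemma inZd_transpose_mult: "inZd d (transpose_mult d U b)"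
  by (simp add: inZd_def transpose_mult_def)

lemma transpose_mult_inverse:
  assumes "int_mat_inverse d V U" and "inZd d a"
  shows "transpose_mult d U (transpose_mult d V a) = a"
proof
  fix k
  show "transpose_mult d U (transpose_mult d V a) k = a k"
  proof (cases "k < d")
    case True
    have "transpose_mult d U (transpose_mult d V a) k = (\<Sum>i<d. (\<Sum>j<d. a j * V j i) * U i k)"
      using True by (simp add: transpose_mult_def)
    also have "\<dots> = (\<Sum>j<d. a j * (\<Sum>i<d. V j i * U i k))"
      by (simp add: sum_distrib_left sum_distrib_right mult.assoc) (rule sum.swap)
    also have "\<dots> = (\<Sum>j<d. if j = k then a j else 0)"
      using assms(1) True by (intro sum.cong) (auto simp: int_mat_inverse_def)
    finally show ?thesis using True by simp
  next
    case False
    then show ?thesis using assms(2) by (simp add: transpose_mult_def inZd_def)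
  qed
qed

lemma transpose_mult_nonzero:
  assumes "int_mat_inverse d U V" and "inZd d b" and "\<exists>i<d. b i \<noteq> 0"
  shows "\<exists>j<d. transpose_mult d U b j \<noteq> 0"
proof (rule ccontr)
  assume "\<not> ?thesis"
  then have "transpose_mult d V (transpose_mult d U b) = (\<lambda>_. 0)"
    by (auto simp: transpose_mult_def)
  then show False
    using transpose_mult_inverse[OF assms(1,2)] assms(3) by auto
qed

lemma pair_unimod_map:
  "pair d b (unimod_map d U t x) = pair d (transpose_mult d U b) x + of_int (\<Sum>i<d. b i * t i)"
proof -
  have "pair d b (unimod_map d U t x)
      = (\<Sum>i<d. \<Sum>j<d. of_int (b i) * of_int (U i j) * x j) + (\<Sum>i<d. of_int (b i) * of_int (t i))"
    by (simp add: pair_def unimod_map_def distrib_left sum.distrib sum_distrib_left mult.assoc)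
  also have "(\<Sum>i<d. \<Sum>j<d. of_int (b i) * of_int (U i j) * x j) = pair d (transpose_mult d U b) x"
    by (simp add: pair_def transpose_mult_def sum_distrib_right) (rule sum.swap)
  finally show ?thesis by simp
qed

lemma hP_unimod_image:
  assumes "P \<noteq> {}" and "bdd_below (pair d (transpose_mult d U b) ` P)"
  shows "hP d (unimod_map d U t ` P) b = hP d P (transpose_mult d U b) + of_int (\<Sum>i<d. b i * t i)"
  using Inf_add_eq[OF assms(2,1), of "of_int (\<Sum>i<d. b i * t i)"]
  by (simp add: hP_def image_image pair_unimod_map add.commute)

lemma bdd_below_pair_unimod_image:
  assumes "\<And>a. bdd_below (pair d a ` P)"
  shows "bdd_below (pair d b ` unimod_map d U t ` P)"
proof -
  obtain \<beta> where "\<forall>x\<in>P. \<beta> \<le> pair d (transpose_mult d U b) x"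
    using assms[of "transpose_mult d U b"] by (auto simp: bdd_below_def)
  then have "\<forall>x\<in>P. \<beta> + of_int (\<Sum>i<d. b i * t i) \<le> pair d b (unimod_map d U t x)"
    by (simp add: pair_unimod_map)
  then show ?thesis by (auto intro: bdd_belowI2)
qed

lemma unimod_map_mem_fine_adjoint:
  assumes UV: "int_mat_inverse d U V" and "P \<noteq> {}" and bdd: "\<And>a. bdd_below (pair d a ` P)"
    and x: "x \<in> fine_adjoint d P s"
  shows "unimod_map d U t x \<in> fine_adjoint d (unimod_map d U t ` P) s"
  unfolding fine_adjoint_def
proof (intro CollectI conjI allI impI)
  show "inRd d (unimod_map d U t x)" by (simp add: inRd_def unimod_map_def)
next
  fix b assume b: "inZd d b \<and> (\<exists>i<d. b i \<noteq> 0)"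
  then have "hP d P (transpose_mult d U b) + s \<le> pair d (transpose_mult d U b) x"
    using x transpose_mult_nonzero[OF UV] inZd_transpose_mult unfolding fine_adjoint_def by blast
  then show "hP d (unimod_map d U t ` P) b + s \<le> pair d b (unimod_map d U t x)"
    using hP_unimod_image[OF \<open>P \<noteq> {}\<close> bdd] by (simp add: pair_unimod_map)
qed

lemma fine_adjoint_nonempty_unimod_equiv:
  assumes "unimod_equiv d P Q" and "P \<noteq> {}" and "\<And>a. bdd_below (pair d a ` P)"
    and "fine_adjoint d P s \<noteq> {}"
  shows "fine_adjoint d Q s \<noteq> {}"
proof -
  obtain U V t where "int_mat_inverse d U V" and "Q = unimod_map d U t ` P"
    using assms(1) unfolding unimod_equiv_iff by blast
  with assms(2-4) show ?thesis
    using unimod_map_mem_fine_adjoint by blast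
qed

lemma fine_codegree_unimod_equiv:
  assumes "unimod_equiv d P Q" and "P \<noteq> {}" and "\<And>a. bdd_below (pair d a ` P)"
  shows "fine_codegree d Q = fine_codegree d P"
proof -
  obtain U V t where "Q = unimod_map d U t ` P"
    using assms(1) unfolding unimod_equiv_iff by blast
  then have "Q \<noteq> {}" and "\<And>a. bdd_below (pair d a ` Q)"
    using assms(2,3) bdd_below_pair_unimod_image by auto
  then have "fine_adjoint d Q s \<noteq> {} \<longleftrightarrow> fine_adjoint d P s \<noteq> {}" for s
    using fine_adjoint_nonempty_unimod_equiv[OF assms]
      fine_adjoint_nonempty_unimod_equiv[OF unimod_equiv_sym[OF assms(1)]] by blast
  then show ?thesis by (simp add: fine_codegree_def)
qed

section \<open>Iterated lattice pyramids over the doubled triangle\<close>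

definition ones_from :: "nat \<Rightarrow> nat \<Rightarrow> nat \<Rightarrow> real" where
  "ones_from k j = (\<lambda>i. if j \<le> i \<and> i < k + 2 then 1 else 0)"

definition pyramid_vertices :: "nat \<Rightarrow> (nat \<Rightarrow> real) set" where
  "pyramid_vertices k =
     ones_from k ` {2..k+2} \<union> {(ones_from k 2)(0 := 2), (ones_from k 2)(1 := 2)}"

lemma finite_pyramid_vertices: "finite (pyramid_vertices k)"
  by (simp add: pyramid_vertices_def)

lemma pyramid_vertices_nonempty: "pyramid_vertices k \<noteq> {}"
  by (simp add: pyramid_vertices_def)

lemma two_Delta2_eq_fconv_pyramid_vertices: "two_Delta2 = fconv (pyramid_vertices 0)"
proof -
  have "{2..0+2::nat} = {2}" by simp
  then have "pyramid_vertices 0 = {ones_from 0 2, (ones_from 0 2)(0 := 2), (ones_from 0 2)(1 := 2)}"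
    unfolding pyramid_vertices_def by (simp only: image_insert image_empty) blast
  moreover have "ones_from 0 2 = (\<lambda>_. 0)" by (auto simp: ones_from_def)
  ultimately show ?thesis by (simp add: two_Delta2_def fun_upd_def)
qed

lemma pyramid_vertices_Suc:
  "pyramid_vertices (Suc k) = (\<lambda>x. x(k+2 := 1)) ` pyramid_vertices k \<union> {\<lambda>_. 0}"
proof -
  have lift: "(ones_from k j)(k+2 := 1) = ones_from (Suc k) j" if "j \<le> k + 2" for j
    using that by (auto simp: ones_from_def)
  have apex: "ones_from (Suc k) (k+3) = (\<lambda>_. 0)"
    by (auto simp: ones_from_def)
  have "{2..Suc k + 2} = insert (k+3) {2..k+2}" by auto
  then have "ones_from (Suc k) ` {2..Suc k + 2}
      = insert (\<lambda>_. 0) ((\<lambda>x. x(k+2 := 1)) ` ones_from k ` {2..k+2})"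
    using lift apex by (auto simp: image_image)
  moreover have "((ones_from k 2)(m := 2))(k+2 := 1) = (ones_from (Suc k) 2)(m := 2)"
    if "m < 2" for m
    using that lift[of 2] fun_upd_twist[of m "k+2" "ones_from k 2" 2 1] by simp
  ultimately show ?thesis
    by (auto simp: pyramid_vertices_def)
qed

lemma iter_pyramid_Suc:
  "iter_pyramid (Suc k) = fconv ((\<lambda>x. x(k+2 := 1)) ` iter_pyramid k \<union> {\<lambda>_. 0})"
  by (simp add: lattice_pyramid_def)

lemma pyramid_vertices_subset_iter_pyramid: "pyramid_vertices k \<subseteq> iter_pyramid k"
proof (induction k)
  case 0
  then show ?case by (auto simp: two_Delta2_eq_fconv_pyramid_vertices intro: mem_fconv)
next
  case (Suc k)
  then show ?case
    unfolding pyramid_vertices_Suc iter_pyramid_Suc by (auto intro: mem_fconv)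
qed

lemma iter_pyramid_pair_lower_bound:
  assumes "\<forall>w\<in>pyramid_vertices k. \<beta> \<le> pair (k+2) b w" and "y \<in> iter_pyramid k"
  shows "\<beta> \<le> pair (k+2) b y"
  using assms
proof (induction k arbitrary: \<beta> y)
  case 0
  then show ?case
    by (auto simp: two_Delta2_eq_fconv_pyramid_vertices intro: pair_fconv_lower_bound)
next
  case (Suc k)
  have lift: "pair (Suc k + 2) b (x(k+2 := 1)) = pair (k+2) b x + of_int (b (k+2))" for x
    by (simp only: add_Suc pair_lessThan_Suc) (simp add: pair_fun_upd_ge)
  have apex: "\<beta> \<le> 0"
    using Suc.prems(1) by (auto simp: pyramid_vertices_Suc pair_def)
  have step: "\<beta> - of_int (b (k+2)) \<le> pair (k+2) b x" if "x \<in> iter_pyramid k" for x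
  proof (rule Suc.IH[OF _ that], intro ballI)
    fix w assume "w \<in> pyramid_vertices k"
    then have "\<beta> \<le> pair (Suc k + 2) b (w(k+2 := 1))"
      using Suc.prems(1) unfolding pyramid_vertices_Suc by blast
    then show "\<beta> - of_int (b (k+2)) \<le> pair (k+2) b w"
      unfolding lift by simp
  qed
  have "\<beta> \<le> pair (Suc k + 2) b v"
    if "v \<in> (\<lambda>x. x(k+2 := 1)) ` iter_pyramid k \<union> {\<lambda>_. 0}" for v
  proof -
    from that consider x where "x \<in> iter_pyramid k" "v = x(k+2 := 1)" | "v = (\<lambda>_. 0)"
      by blast
    then show ?thesis
    proof cases
      case 1
      then show ?thesis using step[OF 1(1)] unfolding 1(2) lift by simp
    next
      case 2
      then show ?thesis using apex by (simp add: pair_def)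
    qed
  qed
  then show ?case
    using Suc.prems(2) unfolding iter_pyramid_Suc by (rule pair_fconv_lower_bound)
qed

lemma hP_iter_pyramid:
  "hP (k+2) (iter_pyramid k) b = Min (pair (k+2) b ` pyramid_vertices k)"
  unfolding hP_def
proof (rule cInf_eq_minimum)
  show "Min (pair (k+2) b ` pyramid_vertices k) \<in> pair (k+2) b ` iter_pyramid k"
    using Min_in finite_pyramid_vertices pyramid_vertices_nonempty
      pyramid_vertices_subset_iter_pyramid
    by (metis finite_imageI image_is_empty image_mono subsetD)
  show "Min (pair (k+2) b ` pyramid_vertices k) \<le> z" if "z \<in> pair (k+2) b ` iter_pyramid k" for z
    using that finite_pyramid_vertices iter_pyramid_pair_lower_bound by fastforce
qed

lemma iter_pyramid_nonempty: "iter_pyramid k \<noteq> {}"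
  using pyramid_vertices_nonempty pyramid_vertices_subset_iter_pyramid by blast

lemma bdd_below_pair_iter_pyramid: "bdd_below (pair (k+2) b ` iter_pyramid k)"
  using iter_pyramid_pair_lower_bound finite_pyramid_vertices
  by (fastforce intro: bdd_belowI2[where m = "Min (pair (k+2) b ` pyramid_vertices k)"])

lemma fine_adjoint_iter_pyramid_ineq:
  assumes "y \<in> fine_adjoint (k+2) (iter_pyramid k) s"
    and "inZd (k+2) b" and "\<exists>i<k+2. b i \<noteq> 0"
    and "\<forall>w\<in>pyramid_vertices k. \<beta> \<le> pair (k+2) b w"
  shows "\<beta> + s \<le> pair (k+2) b y"
proof -
  have "\<beta> \<le> hP (k+2) (iter_pyramid k) b"
    using assms(4) unfolding hP_iter_pyramid
    by (simp add: finite_pyramid_vertices pyramid_vertices_nonempty)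
  then show ?thesis
    using assms(1-3) unfolding fine_adjoint_def by fastforce
qed

lemma fine_adjoint_iter_pyramid_bound:
  assumes y: "y \<in> fine_adjoint (k+2) (iter_pyramid k) s"
  shows "(2 * real (k+2) - 1) * s \<le> 2"
proof -
  have ineq: "\<beta> + s \<le> pair (k+2) b y"
    if "m < k+2" "b m \<noteq> 0" "inZd (k+2) b"
      and "\<forall>w\<in>pyramid_vertices k. \<beta> \<le> pair (k+2) b w" for b \<beta> m
    using fine_adjoint_iter_pyramid_ineq[OF y] that by blast
  note simps = pair_fun_upd_left inZd_def pyramid_vertices_def ones_from_def
  have y0: "s \<le> y 0"
    using ineq[of 0 "(\<lambda>_. 0)(0 := 1)" 0] by (simp add: simps)
  have y1: "s \<le> y 1"
    using ineq[of 1 "(\<lambda>_. 0)(1 := 1)" 0] by (simp add: simps)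
  show ?thesis
  proof (cases "k = 0")
    case True
    have "s - 2 \<le> - y 0 - y 1"
      using ineq[of 0 "(\<lambda>_. 0)(0 := -1, 1 := -1)" "-2"] True by (simp add: simps)
    with y0 y1 True show ?thesis by simp
  next
    case False
    have y2: "s \<le> 2 * y 2 - y 0 - y 1"
      using ineq[of 0 "(\<lambda>_. 0)(0 := -1, 1 := -1, 2 := 2)" 0] False by (simp add: simps)
    have "s \<le> y (Suc j) - y j" if "j \<in> {2..k}" for j
      using ineq[of j "(\<lambda>_. 0)(j := -1, Suc j := 1)" 0] that by (simp add: simps)
    then have "(\<Sum>j=2..k. s) \<le> (\<Sum>j=2..k. y (Suc j) - y j)"
      by (rule sum_mono)
    then have chain: "(real k - 1) * s \<le> y (k+1) - y 2"
      using False by (simp add: sum_Suc_diff of_nat_diff)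
    have last: "s - 1 \<le> - y (k+1)"
      using ineq[of "k+1" "(\<lambda>_. 0)(k+1 := -1)" "-1"] False by (simp add: simps)
    from y0 y1 y2 chain last show ?thesis
      by (simp add: algebra_simps)
  qed
qed

definition tail_sum :: "nat \<Rightarrow> (nat \<Rightarrow> int) \<Rightarrow> nat \<Rightarrow> int" where
  "tail_sum d b j = (\<Sum>i<d. if j \<le> i then b i else 0)"

lemma tail_sum_diff: "j < d \<Longrightarrow> tail_sum d b j - tail_sum d b (Suc j) = b j"
proof -
  assume "j < d"
  have "tail_sum d b j - tail_sum d b (Suc j) = (\<Sum>i<d. if i = j then b i else 0)"
    unfolding tail_sum_def sum_subtractf[symmetric] by (rule sum.cong) auto
  then show ?thesis using \<open>j < d\<close> by simp
qed

lemma pair_ones_from: "pair (k+2) b (ones_from k j) = of_int (tail_sum (k+2) b j)"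
  unfolding pair_def tail_sum_def ones_from_def of_int_sum by (rule sum.cong) auto

lemma pair_ones_from_upd:
  "pair (k+2) b ((ones_from k 2)(0 := 2)) = of_int (2 * b 0 + tail_sum (k+2) b 2)"
  "pair (k+2) b ((ones_from k 2)(1 := 2)) = of_int (2 * b 1 + tail_sum (k+2) b 2)"
proof -
  have "pair (k+2) b ((ones_from k 2)(m := 2)) = of_int (2 * b m + tail_sum (k+2) b 2)"
    if "m < 2" for m
  proof -
    have "pair (k+2) b ((ones_from k 2)(m := 2)) = pair (k+2) b (ones_from k 2) + of_int (b m) * 2"
      using that by (subst pair_fun_upd) (auto simp: ones_from_def)
    then show ?thesis by (simp only: pair_ones_from)
  qed
  then show "pair (k+2) b ((ones_from k 2)(0 := 2)) = of_int (2 * b 0 + tail_sum (k+2) b 2)"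
    and "pair (k+2) b ((ones_from k 2)(1 := 2)) = of_int (2 * b 1 + tail_sum (k+2) b 2)"
    by simp_all
qed

lemma pair_image_pyramid_vertices:
  "pair (k+2) b ` pyramid_vertices k = of_int `
     ({2 * b 0 + tail_sum (k+2) b 2, 2 * b 1 + tail_sum (k+2) b 2} \<union> tail_sum (k+2) b ` {2..k+2})"
  unfolding pyramid_vertices_def image_Un image_insert image_empty image_image
    pair_ones_from pair_ones_from_upd
  by (simp only: Un_commute)

definition core_point :: "nat \<Rightarrow> nat \<Rightarrow> real" where
  "core_point k = (\<lambda>i. 1 / (2 * real (k+2) - 1) *
     (((ones_from k 2)(0 := 2)) i + ((ones_from k 2)(1 := 2)) i + ones_from k 2 i
      + 2 * (\<Sum>j=3..k+2. ones_from k j i)))"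

lemma pair_core_point:
  "(2 * real (k+2) - 1) * pair (k+2) b (core_point k) = of_int
     ((2 * b 0 + tail_sum (k+2) b 2) + (2 * b 1 + tail_sum (k+2) b 2) + tail_sum (k+2) b 2
      + 2 * (\<Sum>j=3..k+2. tail_sum (k+2) b j))"
  unfolding core_point_def pair_scale_right pair_add_right pair_sum_right
    pair_ones_from pair_ones_from_upd
  by simp

(* Integrality and parity: 2 b0 + v 2 and v 2 differ by an even number, so they cannot
   account for an excess of exactly 1 between them. *)
lemma near_minimal_weighted_sum_imp_constant:
  fixes v :: "nat \<Rightarrow> int" and b0 b1 m :: int
  assumes "2 \<le> d"
    and "m \<le> 2 * b0 + v 2" "m \<le> 2 * b1 + v 2" "\<forall>j\<in>{2..d}. m \<le> v j"
    and "(2 * b0 + v 2) + (2 * b1 + v 2) + v 2 + 2 * (\<Sum>j=3..d. v j) \<le> (2 * int d - 1) * m + 1"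
  shows "b0 = 0 \<and> b1 = 0 \<and> (\<forall>j\<in>{2..d}. v j = m)"
proof -
  have "(2 * int d - 1) * m = 3 * m + 2 * (\<Sum>j=3..d. m)"
    using assms(1) by (simp add: of_nat_diff algebra_simps)
  then have excess: "(2 * b0 + v 2 - m) + (2 * b1 + v 2 - m) + (v 2 - m)
      + 2 * (\<Sum>j=3..d. v j - m) \<le> 1"
    using assms(5) by (simp add: sum_subtractf)
  have nonneg: "\<forall>j\<in>{3..d}. 0 \<le> v j - m"
    using assms(4) by auto
  then have "0 \<le> (\<Sum>j=3..d. v j - m)"
    by (intro sum_nonneg) auto
  moreover have "m \<le> v 2"
    using assms(1,4) by auto
  ultimately have "b0 = 0 \<and> b1 = 0 \<and> v 2 = m" and "(\<Sum>j=3..d. v j - m) = 0"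
    using excess assms(2,3) by presburger+
  moreover have "\<forall>j\<in>{3..d}. v j = m"
    using calculation(2) sum_nonneg_eq_0_iff[OF finite_atLeastAtMost, of 3 d "\<lambda>j. v j - m"] nonneg
    by simp
  ultimately show ?thesis
    by (metis atLeastAtMost_iff not_less_eq_eq numeral_2_eq_2 numeral_3_eq_3 order_antisym_conv)
qed

lemma core_point_mem_fine_adjoint:
  "core_point k \<in> fine_adjoint (k+2) (iter_pyramid k) (2 / (2 * real (k+2) - 1))"
  unfolding fine_adjoint_def
proof (intro CollectI conjI allI impI)
  show "inRd (k+2) (core_point k)"
    by (simp add: inRd_def core_point_def ones_from_def)
next
  fix b assume b: "inZd (k+2) b \<and> (\<exists>i<k+2. b i \<noteq> 0)"
  define v where "v = tail_sum (k+2) b"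
  define A where "A = {2 * b 0 + v 2, 2 * b 1 + v 2} \<union> v ` {2..k+2}"
  define S where "S = (2 * b 0 + v 2) + (2 * b 1 + v 2) + v 2 + 2 * (\<Sum>j=3..k+2. v j)"
  define c where "c = 2 * real (k+2) - 1"
  have "finite A" "A \<noteq> {}" by (auto simp: A_def)
  then have hP: "hP (k+2) (iter_pyramid k) b = of_int (Min A)"
    unfolding hP_iter_pyramid pair_image_pyramid_vertices A_def[symmetric] v_def[symmetric]
    by (simp add: mono_Min_commute mono_def)
  have "Min A \<le> x" if "x \<in> A" for x
    using that \<open>finite A\<close> by simp
  then have le: "Min A \<le> 2 * b 0 + v 2" "Min A \<le> 2 * b 1 + v 2"
    "\<forall>j\<in>{2..k+2}. Min A \<le> v j"
    unfolding A_def by auto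
  have "\<not> (b 0 = 0 \<and> b 1 = 0 \<and> (\<forall>j\<in>{2..k+2}. v j = Min A))"
  proof
    assume const: "b 0 = 0 \<and> b 1 = 0 \<and> (\<forall>j\<in>{2..k+2}. v j = Min A)"
    have "b i = 0" if "i < k+2" for i
    proof (cases "i < 2")
      case True
      then show ?thesis using const by (auto simp: less_2_cases_iff)
    next
      case False
      then show ?thesis
        using const that tail_sum_diff[OF that, of b] unfolding v_def by simp
    qed
    with b show False by blast
  qed
  then have "(2 * int (k+2) - 1) * Min A + 2 \<le> S"
    using near_minimal_weighted_sum_imp_constant[of "k+2" "Min A" "b 0" v "b 1"] le
    unfolding S_def by linarith
  then have "real_of_int ((2 * int (k+2) - 1) * Min A + 2) \<le> real_of_int S"
    by (simp only: of_int_le_iff)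
  moreover have "real_of_int ((2 * int (k+2) - 1) * Min A + 2) = c * of_int (Min A) + 2"
    by (simp add: c_def)
  moreover have "c * pair (k+2) b (core_point k) = of_int S"
    unfolding c_def S_def v_def by (rule pair_core_point)
  ultimately have "c * of_int (Min A) + 2 \<le> c * pair (k+2) b (core_point k)"
    by linarith
  moreover have "0 < c" by (simp add: c_def)
  ultimately show
    "hP (k+2) (iter_pyramid k) b + 2 / (2 * real (k+2) - 1) \<le> pair (k+2) b (core_point k)"
    unfolding hP c_def[symmetric] by (simp add: field_simps)
qed

lemma fine_codegree_iter_pyramid: "fine_codegree (k+2) (iter_pyramid k) = real (k+2) - 1 / 2"
proof -
  let ?S = "{s. s > 0 \<and> fine_adjoint (k+2) (iter_pyramid k) s \<noteq> {}}"
  have sup: "Sup ?S = 2 / (2 * real (k+2) - 1)"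
  proof (rule cSup_eq_maximum)
    show "2 / (2 * real (k+2) - 1) \<in> ?S"
      using core_point_mem_fine_adjoint by auto
    show "s \<le> 2 / (2 * real (k+2) - 1)" if "s \<in> ?S" for s
      using that fine_adjoint_iter_pyramid_bound by (auto simp: field_simps)
  qed
  show ?thesis
    unfolding fine_codegree_def sup by (simp add: field_simps)
qed

theorem mainTheorem9:
  fixes d :: nat and P :: "(nat \<Rightarrow> real) set"
  assumes "2 \<le> d"
    and "exceptional_simplex d P"
  shows "fine_codegree d P = real d - 1 / 2"
proof -
  obtain k where d: "d = k + 2"
    using assms(1) le_add_diff_inverse2 by metis
  have "unimod_equiv (k+2) P (iter_pyramid k)"
    using assms(2) unfolding exceptional_simplex_def d by simp
  then have "unimod_equiv (k+2) (iter_pyramid k) P"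
    by (rule unimod_equiv_sym)
  then have "fine_codegree (k+2) P = fine_codegree (k+2) (iter_pyramid k)"
    using iter_pyramid_nonempty bdd_below_pair_iter_pyramid by (rule fine_codegree_unimod_equiv)
  then show ?thesis
    unfolding d by (simp only: fine_codegree_iter_pyramid)
qed

end
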